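(* For any recipes $R$ and $R'$ there are recipes $R_1$ and $R_2$ such that $R[R_1/R_2]=R'$.
   Context: Fix disjoint finite sets $\mathcal C$ (comestible nodes) and $\mathcal A$ (action nodes). A type hierarchy is an acyclic directed graph with a unique maximal node; $t_1\preceq t_2$ means $t_1$ is a subtype of or equal to $t_2$, and $t_1\simeq t_2$ means $t_1\preceq t_2$ or $t_2\preceq t_1$. A recipe graph is $(C,A,E)$ with: (1) $\emptyset\subset C\subseteq\mathcal C$, $\emptyset\subset A\subseteq\mathcal A$; (2) $E\subseteq(C\times A)\cup(A\times C)$; (3) $(C\cup A,E)$ is a connected acyclic directed graph; (4) every action node has at least one incoming and one outgoing arc; (5) every comestible node has at most one incoming arc. A recipe is $(C,A,E,F)$ with $(C,A,E)$ a recipe graph and $F$ assigning a comestible type to each node of $C$ and an action type to each node of $A$ such that $F(n)\simeq F(n')$ for $n,n'\in C$ implies $n=n'$. For a recipe $R=(C,A,E,F)$ write $\mathsf{Coms}(R)=C$, $\mathsf{Acts}(R)=A$, $\mathsf{Nodes}(R)=C\cup A$, $\mathsf{Arcs}(R)=E$, $\mathsf{Type}(R)=F$; $\mathsf{In}(R)$ (resp. $\mathsf{Out}(R)$) are the comestible nodes with no incoming (resp. outgoing) arc. $R'=(C',A',E',F')$ is a subrecipe of $R$, $R'\sqsubseteq R$, iff $C'\subseteq C$, $A'\subseteq A$, $E'=E\cap((C'\times A')\cup(A'\times C'))$, and $F'=F$ on $C'\cup A'$. $R'$ is an untrimmed subrecipe of $R$, $R'\sqsubseteq^* R$, iff $R'\sqsubseteq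 R$ and for every $a\in\mathsf{Acts}(R')$, whenever $(c,a)$ or $(a,c)$ is in $\mathsf{Arcs}(R)$ then $c\in\mathsf{Nodes}(R')$. For $R'\sqsubseteq R$, $\mathsf{Front}(R,R')=(\mathsf{Out}(R')\setminus\mathsf{Out}(R))\cup(\mathsf{In}(R')\setminus\mathsf{In}(R))$. $R_1$ is parallel to $R_2$ w.r.t. $R$ iff for every $c\in\mathsf{Front}(R,R_1)$: for every $(c,a)\in\mathsf{Arcs}(R_1)$ there is some $(c,a')\in\mathsf{Arcs}(R_2)$, and for every $(a,c)\in\mathsf{Arcs}(R_1)$ there is some $(a',c)\in\mathsf{Arcs}(R_2)$. Structural substitution: let $F=\mathsf{Type}(R)$, $F_2=\mathsf{Type}(R_2)$. If (i) $\mathsf{Front}(R,R_1)\subseteq\mathsf{In}(R_2)\cup\mathsf{Out}(R_2)$; (ii) $R_1$ is parallel to $R_2$ w.r.t. $R$; (iii) $R_1\sqsubseteq^* R$; (iv) $(\mathsf{Nodes}(R)\setminus\mathsf{Nodes}(R_1))\cap\mathsf{Nodes}(R_2)=\emptyset$; (v) for all $n\in\mathsf{Nodes}(R)\setminus\mathsf{Nodes}(R_1)$ and $n'\in\mathsf{Nodes}(R_2)$, $F(n)\simeq F_2(n')$ implies $n=n'$, then $R[R_1/R_2]=(C',A',E',F')$ with $C'=(\mathsf{Coms}(R)\setminus\mathsf{Coms}(R_1))\cup\mathsf{Coms}(R_2)$, $A'=(\mathsf{Acts}(R)\setminus\mathsf{Acts}(R_1))\cup\mathsf{Acts}(R_2)$,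 $E'=(\mathsf{Arcs}(R)\setminus\mathsf{Arcs}(R_1))\cup\mathsf{Arcs}(R_2)$, and $F'(n)=F_2(n)$ if $n\in\mathsf{Nodes}(R_2)$, $F'(n)=F(n)$ otherwise; if any condition fails, $R[R_1/R_2]=\bot$. *)

theory Defs
  imports Main
begin

(* Type hierarchy: a finite acyclic directed graph (T, H) with a unique maximal node.
   An arc (t1, t2) in H means t1 is a direct subtype of t2; t1 \<preceq> t2 iff (t1,t2) \<in> H\<^sup>*. *)
definition type_hierarchy :: "'t set \<Rightarrow> 't rel \<Rightarrow> bool" where
  "type_hierarchy T H \<longleftrightarrow> finite T \<and> H \<subseteq> T \<times> T \<and> acyclic H \<and>
     (\<exists>!m. m \<in> T \<and> (\<forall>t. (m, t) \<notin> H))"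

definition subtype_eq :: "'t rel \<Rightarrow> 't \<Rightarrow> 't \<Rightarrow> bool" where
  "subtype_eq H t1 t2 \<longleftrightarrow> (t1, t2) \<in> H\<^sup>*"

definition comparable :: "'t rel \<Rightarrow> 't \<Rightarrow> 't \<Rightarrow> bool" where
  "comparable H t1 t2 \<longleftrightarrow> subtype_eq H t1 t2 \<or> subtype_eq H t2 t1"

record ('n, 't) recipe =
  Coms :: "'n set"
  Acts :: "'n set"
  Arcs :: "('n \<times> 'n) set"
  Type :: "'n \<Rightarrow> 't option"

definition Nodes :: "('n, 't) recipe \<Rightarrow> 'n set" where
  "Nodes R = Coms R \<union> Acts R"

definition InR :: "('n, 't) recipe \<Rightarrow> 'n set" where
  "InR R = {c \<in> Coms R. \<not> (\<exists>x. (x, c) \<in> Arcs R)}"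

definition OutR :: "('n, 't) recipe \<Rightarrow> 'n set" where
  "OutR R = {c \<in> Coms R. \<not> (\<exists>x. (c, x) \<in> Arcs R)}"

definition connected_graph :: "'n set \<Rightarrow> ('n \<times> 'n) set \<Rightarrow> bool" where
  "connected_graph V E \<longleftrightarrow> (\<forall>u\<in>V. \<forall>v\<in>V. (u, v) \<in> (E \<union> E\<inverse>)\<^sup>*)"

definition recipe_graph :: "'n set \<Rightarrow> 'n set \<Rightarrow> 'n set \<Rightarrow> 'n set \<Rightarrow> ('n \<times> 'n) set \<Rightarrow> bool" where
  "recipe_graph CN AN C A E \<longleftrightarrow>
     {} \<subset> C \<and> C \<subseteq> CN \<and> {} \<subset> A \<and> A \<subseteq> AN \<and>
     E \<subseteq> (C \<times> A) \<union> (A \<times> C) \<and>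
     connected_graph (C \<union> A) E \<and> acyclic E \<and>
     (\<forall>a\<in>A. (\<exists>c. (c, a) \<in> E) \<and> (\<exists>c. (a, c) \<in> E)) \<and>
     (\<forall>c\<in>C. \<forall>x y. (x, c) \<in> E \<and> (y, c) \<in> E \<longrightarrow> x = y)"

definition is_recipe :: "'n set \<Rightarrow> 'n set \<Rightarrow> 't set \<Rightarrow> 't rel \<Rightarrow> 't set \<Rightarrow> 't rel
    \<Rightarrow> ('n, 't) recipe \<Rightarrow> bool" where
  "is_recipe CN AN TC HC TA HA R \<longleftrightarrow>
     recipe_graph CN AN (Coms R) (Acts R) (Arcs R) \<and>
     dom (Type R) = Nodes R \<and>
     (\<forall>c\<in>Coms R. \<exists>t. Type R c = Some t \<and> t \<in> TC) \<and>
     (\<forall>a\<in>Acts R. \<exists>t. Type R a = Some t \<and> t \<in> TA) \<and>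
     (\<forall>n\<in>Coms R. \<forall>n'\<in>Coms R.
        comparable HC (the (Type R n)) (the (Type R n')) \<longrightarrow> n = n')"

definition subrecipe :: "('n, 't) recipe \<Rightarrow> ('n, 't) recipe \<Rightarrow> bool" where
  "subrecipe R' R \<longleftrightarrow>
     Coms R' \<subseteq> Coms R \<and> Acts R' \<subseteq> Acts R \<and>
     Arcs R' = Arcs R \<inter> ((Coms R' \<times> Acts R') \<union> (Acts R' \<times> Coms R')) \<and>
     (\<forall>n\<in>Nodes R'. Type R' n = Type R n)"

definition untrimmed_subrecipe :: "('n, 't) recipe \<Rightarrow> ('n, 't) recipe \<Rightarrow> bool" where
  "untrimmed_subrecipe R' R \<longleftrightarrow> subrecipe R' R \<and>
     (\<forall>a\<in>Acts R'. \<forall>c. ((c, a) \<in> Arcs R \<or> (a, c) \<in> Arcs R) \<longrightarrow> c \<in> Nodes R')"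

definition Front :: "('n, 't) recipe \<Rightarrow> ('n, 't) recipe \<Rightarrow> 'n set" where
  "Front R R' = (OutR R' - OutR R) \<union> (InR R' - InR R)"

definition parallel :: "('n, 't) recipe \<Rightarrow> ('n, 't) recipe \<Rightarrow> ('n, 't) recipe \<Rightarrow> bool" where
  "parallel R R1 R2 \<longleftrightarrow> (\<forall>c\<in>Front R R1.
     (\<forall>a. (c, a) \<in> Arcs R1 \<longrightarrow> (\<exists>a'. (c, a') \<in> Arcs R2)) \<and>
     (\<forall>a. (a, c) \<in> Arcs R1 \<longrightarrow> (\<exists>a'. (a', c) \<in> Arcs R2)))"

(* Structural substitution R[R1/R2]; None plays the role of \<bottom>.
   H is the (union of the) type hierarchy relation(s) used for \<simeq>. *)
definition subst :: "'t rel \<Rightarrow> ('n, 't) recipe \<Rightarrow> ('n, 't) recipe \<Rightarrow> ('n, 't) recipe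
    \<Rightarrow> ('n, 't) recipe option" where
  "subst H R R1 R2 =
     (if Front R R1 \<subseteq> InR R2 \<union> OutR R2 \<and>
         parallel R R1 R2 \<and>
         untrimmed_subrecipe R1 R \<and>
         (Nodes R - Nodes R1) \<inter> Nodes R2 = {} \<and>
         (\<forall>n\<in>Nodes R - Nodes R1. \<forall>n'\<in>Nodes R2.
            comparable H (the (Type R n)) (the (Type R2 n')) \<longrightarrow> n = n')
      then Some \<lparr> Coms = (Coms R - Coms R1) \<union> Coms R2,
                  Acts = (Acts R - Acts R1) \<union> Acts R2,
                  Arcs = (Arcs R - Arcs R1) \<union> Arcs R2,
                  Type = (\<lambda>n. if n \<in> Nodes R2 then Type R2 n
                              else if n \<in> Nodes R - Nodes R1 then Type R n else None) \<rparr>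
      else None)"

end

theory Submission
  imports Defs
begin

lemma Front_self: "Front R R = {}"
  unfolding Front_def by blast

lemma parallel_self: "parallel R R R2"
  unfolding parallel_def Front_self by blast

lemma recipe_Arcs_subset:
  assumes "is_recipe CN AN TC HC TA HA R"
  shows "Arcs R \<subseteq> (Coms R \<times> Acts R) \<union> (Acts R \<times> Coms R)"
  using assms unfolding is_recipe_def recipe_graph_def by blast

lemma untrimmed_subrecipe_refl:
  assumes "Arcs R \<subseteq> (Coms R \<times> Acts R) \<union> (Acts R \<times> Coms R)"
  shows "untrimmed_subrecipe R R"
  using assms unfolding untrimmed_subrecipe_def subrecipe_def Nodes_def by blast

lemma subst_self:
  assumes "Arcs R \<subseteq> (Coms R \<times> Acts R) \<union> (Acts R \<times> Coms R)"
    and "dom (Type R2) = Nodes R2"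
  shows "subst H R R R2 = Some R2"
proof -
  have "Type R2 n = None" if "n \<notin> Nodes R2" for n
    using that assms(2) by blast
  then have "(\<lambda>n. if n \<in> Nodes R2 then Type R2 n
             else if n \<in> Nodes R - Nodes R then Type R n else None) = Type R2"
    by auto
  then show ?thesis
    unfolding subst_def
    by (simp add: Front_self parallel_self untrimmed_subrecipe_refl[OF assms(1)])
qed

theorem mainTheorem9:
  fixes CN AN :: "'n set" and TC TA :: "'t set" and HC HA :: "'t rel"
    and R R' :: "('n, 't) recipe"
  assumes "finite CN" and "finite AN" and "CN \<inter> AN = {}"
    and "type_hierarchy TC HC" and "type_hierarchy TA HA" and "TC \<inter> TA = {}"
    and "is_recipe CN AN TC HC TA HA R"
    and "is_recipe CN AN TC HC TA HA R'"
  shows "\<exists>R1 R2. is_recipe CN AN TC HC TA HA R1 \<and> is_recipe CN AN TC HC TA HA R2 \<and>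
           subst (HC \<union> HA) R R1 R2 = Some R'"
proof (intro exI conjI)
  show "is_recipe CN AN TC HC TA HA R" "is_recipe CN AN TC HC TA HA R'" by fact+
  have "dom (Type R') = Nodes R'"
    using assms(8) unfolding is_recipe_def by blast
  then show "subst (HC \<union> HA) R R R' = Some R'"
    using subst_self recipe_Arcs_subset[OF assms(7)] by blast
qed

end
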